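(* Let $n$ DMUs, indexed by $J$, each use $m$ inputs (indexed by $I$) and produce $s$ outputs (indexed by $R$), with $n\ge2(m+s)$ and all data $x_{ij}>0$, $y_{rj}>0$. Let $o$ be a DMU that is efficient in the PT model (PT efficiency equal to $1$). For a goal price $\tau_o>0$, the TVG (primal) program of the sPT model is $$\Delta_o^{sPT}=\max_{v_o,u_o}\ -\sum_{i}v_{io}x_{io}+\sum_r u_{ro}y_{ro}$$ subject to $-\sum_i v_{io}x_{ij}+\sum_r u_{ro}y_{rj}\le0$ for all $j\in J\setminus\{o\}$, $x_{io}v_{io}\ge\tau_o$ ($i\in I$), $y_{ro}u_{ro}\ge\tau_o$ ($r\in R$), with $v_o\ge0$ and $u_o$ free. Let $(v_o^\#,u_o^\#)$ be optimal for $\tau_o=1$ (Step I), $\bar t=1/\sum_r u^\#_{ro}y_{ro}$, and $(v_o^\star,u_o^\star)=\bar t(v_o^\#,u_o^\#)$ (Step II). With $\alpha_o^\star=\sum_i v^\star_{io}x_{io}$ and $\beta_o^\star=\sum_r u^\star_{ro}y_{ro}$, the super-pure-technical efficiency $E_o^{sPT\star}=\beta_o^\star/\alpha_o^\star$ satisfies $E_o^{sPT\star}\ge1$.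
   Context: The PT model for DMU-$o$ is the linear program $\min\sum_i v_{io}x_{io}-\sum_r u_{ro}y_{ro}$ s.t. $\sum_i v_{io}x_{ij}-\sum_r u_{ro}y_{rj}\ge0$ ($j\in J$), $x_{io}v_{io}\ge\tau_o$, $y_{ro}u_{ro}\ge\tau_o$, $v_o,u_o$ free; its efficiency is $\sum_r u^\star_{ro}y_{ro}/\sum_i v^\star_{io}x_{io}$ at an optimal solution. The TAP (dual) program of the sPT model is $\min\sum_iQ_{io}\tau_o+\sum_rP_{ro}\tau_o$ s.t. $-\sum_{j\ne o}x_{ij}\pi_{jo}+Q_{io}x_{io}\ge-x_{io}$, $\sum_{j\ne o}y_{rj}\pi_{jo}+P_{ro}y_{ro}=y_{ro}$, $\pi_o,Q_o,P_o\ge0$. *)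

theory Defs
  imports Complex_Main
begin

text \<open>DEA data: inputs indexed by I, outputs by R, DMUs by J.
  x i j = input i of DMU j, y r j = output r of DMU j.
  Multiplier vectors are total functions; only their values on I resp. R matter.\<close>

definition virtual_input :: "'i set \<Rightarrow> ('i \<Rightarrow> 'j \<Rightarrow> real) \<Rightarrow> ('i \<Rightarrow> real) \<Rightarrow> 'j \<Rightarrow> real" where
  "virtual_input I x v j = (\<Sum>i\<in>I. v i * x i j)"

definition virtual_output :: "'r set \<Rightarrow> ('r \<Rightarrow> 'j \<Rightarrow> real) \<Rightarrow> ('r \<Rightarrow> real) \<Rightarrow> 'j \<Rightarrow> real" where
  "virtual_output R y u j = (\<Sum>r\<in>R. u r * y r j)"

definition PT_feasible where
  "PT_feasible I R J x y d0 tau v u \<longleftrightarrow>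
     (\<forall>j\<in>J. virtual_input I x v j - virtual_output R y u j \<ge> 0) \<and>
     (\<forall>i\<in>I. x i d0 * v i \<ge> tau) \<and> (\<forall>r\<in>R. y r d0 * u r \<ge> tau)"

definition PT_objective where
  "PT_objective I R x y d0 v u = virtual_input I x v d0 - virtual_output R y u d0"

definition PT_optimal where
  "PT_optimal I R J x y d0 tau v u \<longleftrightarrow>
     PT_feasible I R J x y d0 tau v u \<and>
     (\<forall>v' u'. PT_feasible I R J x y d0 tau v' u' \<longrightarrow>
        PT_objective I R x y d0 v u \<le> PT_objective I R x y d0 v' u')"

definition PT_efficiency where
  "PT_efficiency I R x y d0 v u = virtual_output R y u d0 / virtual_input I x v d0"

definition PT_efficient where
  "PT_efficient I R J x y d0 \<longleftrightarrow>
     (\<exists>tau>0. \<exists>v u. PT_optimal I R J x y d0 tau v u \<and> PT_efficiency I R x y d0 v u = 1)"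

definition sPT_feasible where
  "sPT_feasible I R J x y d0 tau v u \<longleftrightarrow>
     (\<forall>j\<in>J - {d0}. - virtual_input I x v j + virtual_output R y u j \<le> 0) \<and>
     (\<forall>i\<in>I. x i d0 * v i \<ge> tau) \<and> (\<forall>r\<in>R. y r d0 * u r \<ge> tau) \<and>
     (\<forall>i\<in>I. v i \<ge> 0)"

definition sPT_objective where
  "sPT_objective I R x y d0 v u = - virtual_input I x v d0 + virtual_output R y u d0"

definition sPT_optimal where
  "sPT_optimal I R J x y d0 tau v u \<longleftrightarrow>
     sPT_feasible I R J x y d0 tau v u \<and>
     (\<forall>v' u'. sPT_feasible I R J x y d0 tau v' u' \<longrightarrow>
        sPT_objective I R x y d0 v' u' \<le> sPT_objective I R x y d0 v u)"

end

theory Submission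
  imports Defs
begin

text \<open>For a PT-efficient DMU o, an optimal PT solution has virtual output equal to virtual
  input. Its input multipliers are positive, so after division by its goal price it is a
  feasible TVG solution for goal price 1 (the TVG program merely drops the constraint of
  DMU o) with objective value 0. Hence the optimal TVG value is nonnegative, that is
  \<open>\<beta> \<ge> \<alpha>\<close> already for the Step I solution, and the Step II normalisation rescales
  \<open>\<alpha>\<close> and \<open>\<beta>\<close> by the same positive factor.\<close>

lemma virtual_input_scale:
  "virtual_input I x (\<lambda>i. c * v i) j = c * virtual_input I x v j"
  unfolding virtual_input_def by (simp add: sum_distrib_left mult.assoc)

lemma virtual_output_scale:
  "virtual_output R y (\<lambda>r. c * u r) j = c * virtual_output R y u j"
  unfolding virtual_output_def by (simp add: sum_distrib_left mult.assoc)

lemma sPT_objective_scale: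
  "sPT_objective I R x y d0 (\<lambda>i. c * v i) (\<lambda>r. c * u r) = c * sPT_objective I R x y d0 v u"
  unfolding sPT_objective_def virtual_input_scale virtual_output_scale
  by (simp add: algebra_simps)

lemma sPT_feasible_scale:
  assumes "c > 0" and "sPT_feasible I R J x y d0 tau v u"
  shows "sPT_feasible I R J x y d0 (c * tau) (\<lambda>i. c * v i) (\<lambda>r. c * u r)"
proof -
  have "- (c * a) + c * b \<le> 0" if "- a + b \<le> (0::real)" for a b
  proof -
    have "c * (- a + b) \<le> 0"
      using that \<open>c > 0\<close> by (simp add: mult_nonneg_nonpos)
    then show ?thesis by (simp add: algebra_simps)
  qed
  moreover have "c * tau \<le> z * (c * w)" if "tau \<le> z * w" for z w :: real
    using that \<open>c > 0\<close> by (simp add: mult.left_commute)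
  ultimately show ?thesis
    using assms unfolding sPT_feasible_def virtual_input_scale virtual_output_scale
    by auto
qed

lemma PT_feasible_imp_sPT_feasible:
  assumes "PT_feasible I R J x y d0 tau v u" and "\<forall>i\<in>I. v i \<ge> 0"
  shows "sPT_feasible I R J x y d0 tau v u"
  using assms unfolding PT_feasible_def sPT_feasible_def by auto

lemma PT_feasible_input_multiplier_pos:
  assumes "PT_feasible I R J x y d0 tau v u" and "tau > 0"
    and "i \<in> I" and "x i d0 > 0"
  shows "v i > 0"
proof -
  have "x i d0 * v i > 0"
    using assms unfolding PT_feasible_def by fastforce
  then show ?thesis
    using \<open>x i d0 > 0\<close> by (simp add: zero_less_mult_iff)
qed

lemma sPT_feasible_virtual_input_pos:
  assumes "sPT_feasible I R J x y d0 tau v u" and "tau > 0" and "finite I" "I \<noteq> {}"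
  shows "virtual_input I x v d0 > 0"
  unfolding virtual_input_def
proof (rule sum_pos[OF \<open>finite I\<close> \<open>I \<noteq> {}\<close>])
  fix i assume "i \<in> I"
  then show "v i * x i d0 > 0"
    using assms(1,2) unfolding sPT_feasible_def by (fastforce simp: mult.commute)
qed

lemma sPT_feasible_virtual_output_pos:
  assumes "sPT_feasible I R J x y d0 tau v u" and "tau > 0" and "finite R" "R \<noteq> {}"
  shows "virtual_output R y u d0 > 0"
  unfolding virtual_output_def
proof (rule sum_pos[OF \<open>finite R\<close> \<open>R \<noteq> {}\<close>])
  fix r assume "r \<in> R"
  then show "u r * y r d0 > 0"
    using assms(1,2) unfolding sPT_feasible_def by (fastforce simp: mult.commute)
qed

lemma PT_efficient_imp_sPT_optimal_value_nonneg:
  assumes "PT_efficient I R J x y d0" and "sPT_optimal I R J x y d0 1 vh uh"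
    and "finite I" "I \<noteq> {}" and "\<forall>i\<in>I. x i d0 > 0"
  shows "sPT_objective I R x y d0 vh uh \<ge> 0"
proof -
  obtain tau v u where "tau > 0" and opt: "PT_optimal I R J x y d0 tau v u"
    and eff: "PT_efficiency I R x y d0 v u = 1"
    using assms(1) unfolding PT_efficient_def by blast
  have PT_feas: "PT_feasible I R J x y d0 tau v u"
    using opt unfolding PT_optimal_def by simp
  have v_pos: "\<forall>i\<in>I. v i > 0"
    using PT_feasible_input_multiplier_pos[OF PT_feas \<open>tau > 0\<close>] assms(5) by blast
  have sPT_feas: "sPT_feasible I R J x y d0 tau v u"
    using PT_feasible_imp_sPT_feasible[OF PT_feas] v_pos by (simp add: less_imp_le)
  have "virtual_input I x v d0 > 0"
    using sPT_feasible_virtual_input_pos[OF sPT_feas \<open>tau > 0\<close> assms(3,4)] .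
  with eff have "sPT_objective I R x y d0 v u = 0"
    unfolding PT_efficiency_def sPT_objective_def by simp
  moreover have "sPT_feasible I R J x y d0 1 (\<lambda>i. (1 / tau) * v i) (\<lambda>r. (1 / tau) * u r)"
    using sPT_feasible_scale[OF _ sPT_feas, of "1 / tau"] \<open>tau > 0\<close> by simp
  ultimately show ?thesis
    using assms(2) sPT_objective_scale[of I R x y d0 "1 / tau" v u]
    unfolding sPT_optimal_def by fastforce
qed

theorem theorem6:
  fixes I :: "'i set" and R :: "'r set" and J :: "'j set"
    and x :: "'i \<Rightarrow> 'j \<Rightarrow> real" and y :: "'r \<Rightarrow> 'j \<Rightarrow> real" and d0 :: 'j
    and vh :: "'i \<Rightarrow> real" and uh :: "'r \<Rightarrow> real"
  assumes "finite I" "finite R" "finite J"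
    and "I \<noteq> {}" "R \<noteq> {}"
    and "d0 \<in> J"
    and "card J \<ge> 2 * (card I + card R)"
    and "\<forall>i\<in>I. \<forall>j\<in>J. x i j > 0"
    and "\<forall>r\<in>R. \<forall>j\<in>J. y r j > 0"
    and "PT_efficient I R J x y d0"
    and "sPT_optimal I R J x y d0 1 vh uh"
  shows "let tbar = 1 / virtual_output R y uh d0;
             vstar = (\<lambda>i. tbar * vh i);
             ustar = (\<lambda>r. tbar * uh r);
             alpha = virtual_input I x vstar d0;
             beta = virtual_output R y ustar d0
         in beta / alpha \<ge> 1"
proof -
  define A where "A = virtual_input I x vh d0"
  define B where "B = virtual_output R y uh d0"
  have feas: "sPT_feasible I R J x y d0 1 vh uh"
    using assms(11) unfolding sPT_optimal_def by simp
  have "A > 0"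
    unfolding A_def using sPT_feasible_virtual_input_pos[OF feas _ assms(1,4)] by simp
  moreover have "B > 0"
    unfolding B_def using sPT_feasible_virtual_output_pos[OF feas _ assms(2,5)] by simp
  moreover have "A \<le> B"
    using PT_efficient_imp_sPT_optimal_value_nonneg[OF assms(10,11,1,4)] assms(6,8)
    unfolding A_def B_def sPT_objective_def by simp
  ultimately show ?thesis
    unfolding Let_def virtual_input_scale virtual_output_scale A_def[symmetric] B_def[symmetric]
    by simp
qed

end
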